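(* Let $B$ be a proper $\mathbb{C}(z)$-submodule of $\mathbb{C}(z)\otimes\mathbb{C}^r$ and $B^*=B\cap(\mathbb{C}[z]\otimes\mathbb{C}^r)$. A vectorial $pg$-sequence $u_{\omega,h}$ is orthogonal to $B$ if and only if it is orthogonal to $B^*$.
   Context: $\mathbb{C}(z)$ is the Laurent polynomial ring in $z_1,\dots,z_d$ and $\mathbb{C}[z]$ the polynomial ring. A vectorial $pg$-sequence is $u_{\omega,h}:\mathbb{Z}^d\to\mathbb{C}^r$, $k\mapsto\omega^kh(k)$, with $\omega\in(\mathbb{C}\setminus\{0\})^d$, $\omega^k=\prod_i\omega_i^{k_i}$, $h\in\mathbb{C}[z]\otimes\mathbb{C}^r$. For $p=\sum_ka_kz^k\in\mathbb{C}(z)\otimes\mathbb{C}^r$ and $u:\mathbb{Z}^d\to\mathbb{C}^r$, $\langle p,u\rangle=\sum_ka_k\cdot u(k)$; $u$ is orthogonal to a set $S$ if $\langle p,u\rangle=0$ for all $p\in S$. *)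

theory Defs
  imports Complex_Main "HOL-Library.Function_Algebras"
begin

text \<open>An element of C(z) (x) C^r is a finitely
supported coefficient function p : Z^d -> C^r, representing sum_k p(k) z^k.\<close>

definition laurent_vec :: "(('d \<Rightarrow> int) \<Rightarrow> ('r \<Rightarrow> complex)) \<Rightarrow> bool" where
  "laurent_vec p \<longleftrightarrow> finite {k. p k \<noteq> 0}"

definition laurent_poly :: "(('d \<Rightarrow> int) \<Rightarrow> complex) \<Rightarrow> bool" where
  "laurent_poly c \<longleftrightarrow> finite {k. c k \<noteq> 0}"

definition lmult :: "(('d \<Rightarrow> int) \<Rightarrow> complex) \<Rightarrow> (('d \<Rightarrow> int) \<Rightarrow> ('r \<Rightarrow> complex))
    \<Rightarrow> (('d \<Rightarrow> int) \<Rightarrow> ('r \<Rightarrow> complex))" where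
  "lmult c p = (\<lambda>k i. \<Sum>j\<in>{j. c j \<noteq> 0}. c j * p (k - j) i)"

definition laurent_submodule :: "(('d \<Rightarrow> int) \<Rightarrow> ('r \<Rightarrow> complex)) set \<Rightarrow> bool" where
  "laurent_submodule B \<longleftrightarrow>
     B \<subseteq> {p. laurent_vec p} \<and> 0 \<in> B \<and>
     (\<forall>p\<in>B. \<forall>q\<in>B. p + q \<in> B) \<and>
     (\<forall>c p. laurent_poly c \<longrightarrow> p \<in> B \<longrightarrow> lmult c p \<in> B)"

definition poly_vec :: "(('d \<Rightarrow> int) \<Rightarrow> ('r \<Rightarrow> complex)) \<Rightarrow> bool" where
  "poly_vec p \<longleftrightarrow> laurent_vec p \<and> (\<forall>k. p k \<noteq> 0 \<longrightarrow> (\<forall>i. 0 \<le> k i))"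

definition pairing :: "(('d \<Rightarrow> int) \<Rightarrow> ('r::finite \<Rightarrow> complex)) \<Rightarrow> (('d \<Rightarrow> int) \<Rightarrow> ('r \<Rightarrow> complex)) \<Rightarrow> complex" where
  "pairing p u = (\<Sum>k\<in>{k. p k \<noteq> 0}. \<Sum>i\<in>UNIV. p k i * u k i)"

definition orthogonal_to :: "(('d \<Rightarrow> int) \<Rightarrow> ('r::finite \<Rightarrow> complex)) set \<Rightarrow> (('d \<Rightarrow> int) \<Rightarrow> ('r \<Rightarrow> complex)) \<Rightarrow> bool" where
  "orthogonal_to S u \<longleftrightarrow> (\<forall>p\<in>S. pairing p u = 0)"

definition poly_vec_eval :: "(('d::finite \<Rightarrow> int) \<Rightarrow> ('r \<Rightarrow> complex)) \<Rightarrow> ('d \<Rightarrow> int) \<Rightarrow> ('r \<Rightarrow> complex)" where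
  "poly_vec_eval h k = (\<lambda>i. \<Sum>m\<in>{m. h m \<noteq> 0}. h m i * (\<Prod>j\<in>UNIV. of_int (k j) ^ nat (m j)))"

definition pg_seq :: "('d::finite \<Rightarrow> complex) \<Rightarrow> (('d \<Rightarrow> int) \<Rightarrow> ('r \<Rightarrow> complex)) \<Rightarrow> ('d \<Rightarrow> int) \<Rightarrow> ('r \<Rightarrow> complex)" where
  "pg_seq \<omega> h = (\<lambda>k i. (\<Prod>j\<in>UNIV. \<omega> j powi k j) * poly_vec_eval h k i)"

end

theory Submission
  imports Defs "HOL-Computational_Algebra.Polynomial"
begin

text \<open>Multiplying p by the monomial z^m translates its coefficients by m, and for m large in
every coordinate the translate is a polynomial vector lying in B; so orthogonality to the
polynomial part gives \<open>\<langle>p, u(\<cdot> + m)\<rangle> = 0\<close> on a whole orthant of m. For a pg-sequence,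
\<open>\<langle>p, u(\<cdot> + m)\<rangle>\<close> is \<open>\<omega>\<^sup>m\<close> times a polynomial function of m, and a polynomial function on
\<open>\<int>\<^sup>d\<close> vanishing on an orthant vanishes everywhere; evaluating at m = 0 gives \<open>\<langle>p, u\<rangle> = 0\<close>.\<close>

inductive int_poly_fun :: "(('d \<Rightarrow> int) \<Rightarrow> complex) \<Rightarrow> bool" where
  int_poly_fun_const: "int_poly_fun (\<lambda>_. c)"
| int_poly_fun_coord: "int_poly_fun (\<lambda>m. of_int (m i))"
| int_poly_fun_add: "int_poly_fun f \<Longrightarrow> int_poly_fun g \<Longrightarrow> int_poly_fun (\<lambda>m. f m + g m)"
| int_poly_fun_mult: "int_poly_fun f \<Longrightarrow> int_poly_fun g \<Longrightarrow> int_poly_fun (\<lambda>m. f m * g m)"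

lemma int_poly_fun_sum:
  "(\<And>x. x \<in> A \<Longrightarrow> int_poly_fun (f x)) \<Longrightarrow> int_poly_fun (\<lambda>m. \<Sum>x\<in>A. f x m)"
  by (induction A rule: infinite_finite_induct) (auto intro: int_poly_fun_const int_poly_fun_add)

lemma int_poly_fun_prod:
  "(\<And>x. x \<in> A \<Longrightarrow> int_poly_fun (f x)) \<Longrightarrow> int_poly_fun (\<lambda>m. \<Prod>x\<in>A. f x m)"
  by (induction A rule: infinite_finite_induct) (auto intro: int_poly_fun_const int_poly_fun_mult)

lemma int_poly_fun_power: "int_poly_fun f \<Longrightarrow> int_poly_fun (\<lambda>m. f m ^ n)"
  by (induction n) (auto intro: int_poly_fun_const int_poly_fun_mult)

lemma int_poly_fun_restrict_coord:
  assumes "int_poly_fun f"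
  shows "\<exists>q. \<forall>t. f (m(i := t)) = poly q (of_int t)"
  using assms
proof (induction rule: int_poly_fun.induct)
  case (int_poly_fun_const c)
  show ?case by (rule exI[of _ "[:c:]"]) simp
next
  case (int_poly_fun_coord l)
  show ?case
    by (cases "l = i") (auto intro: exI[of _ "[:0, 1:]"] exI[of _ "[:of_int (m l):]"])
next
  case (int_poly_fun_add f g)
  then obtain q1 q2 where "\<forall>t. f (m(i := t)) = poly q1 (of_int t)" "\<forall>t. g (m(i := t)) = poly q2 (of_int t)"
    by blast
  then have "\<forall>t. f (m(i := t)) + g (m(i := t)) = poly (q1 + q2) (of_int t)" by simp
  then show ?case by blast
next
  case (int_poly_fun_mult f g)
  then obtain q1 q2 where "\<forall>t. f (m(i := t)) = poly q1 (of_int t)" "\<forall>t. g (m(i := t)) = poly q2 (of_int t)"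
    by blast
  then have "\<forall>t. f (m(i := t)) * g (m(i := t)) = poly (q1 * q2) (of_int t)" by simp
  then show ?case by blast
qed

lemma poly_eq_0_if_vanishes_on_Ici:
  fixes q :: "complex poly"
  assumes "\<And>t. a \<le> t \<Longrightarrow> poly q (of_int t) = 0"
  shows "q = 0"
proof (rule ccontr)
  assume "q \<noteq> 0"
  then have "finite {x. poly q x = 0}" by (rule poly_roots_finite)
  moreover have "of_int ` {a..} \<subseteq> {x. poly q x = 0}" using assms by auto
  ultimately have "finite (of_int ` {a..} :: complex set)" by (rule finite_subset[rotated])
  moreover have "inj_on (of_int :: int \<Rightarrow> complex) {a..}" by (auto simp: inj_on_def)
  ultimately show False using finite_imageD infinite_Ici by blast
qed

text \<open>Induction on the set S of coordinates that are released from the orthant condition.\<close>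
lemma int_poly_fun_vanishes_on_partial_orthant:
  assumes f: "int_poly_fun f" and vanish: "\<And>m. (\<forall>i. M i \<le> m i) \<Longrightarrow> f m = 0"
    and "finite S"
  shows "(\<forall>i. i \<notin> S \<longrightarrow> M i \<le> m i) \<Longrightarrow> f m = 0"
  using \<open>finite S\<close>
proof (induction S arbitrary: m rule: finite_induct)
  case empty
  then show ?case using vanish by auto
next
  case (insert i S)
  obtain q where q: "\<forall>t. f (m(i := t)) = poly q (of_int t)"
    using int_poly_fun_restrict_coord[OF f] by blast
  have "poly q (of_int t) = 0" if "M i \<le> t" for t
  proof -
    have "f (m(i := t)) = 0"
      by (rule insert.IH) (use insert.prems that in auto)
    then show ?thesis using q by simp
  qed
  then have "q = 0" by (rule poly_eq_0_if_vanishes_on_Ici)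
  then show "f m = 0" using q by (metis fun_upd_triv poly_0)
qed

lemma int_poly_fun_eq_0_if_vanishes_on_orthant:
  fixes f :: "('d::finite \<Rightarrow> int) \<Rightarrow> complex"
  assumes "int_poly_fun f" and "\<And>m. (\<forall>i. M i \<le> m i) \<Longrightarrow> f m = 0"
  shows "f m = 0"
  using int_poly_fun_vanishes_on_partial_orthant[OF assms finite_UNIV] by simp

lemma int_poly_fun_poly_vec_eval_translate:
  "int_poly_fun (\<lambda>m. poly_vec_eval h (k + m) i)"
proof -
  have "int_poly_fun (\<lambda>m. of_int (k j) + of_int (m j))" for j
    by (intro int_poly_fun_add int_poly_fun_const int_poly_fun_coord)
  then have "int_poly_fun (\<lambda>m. of_int ((k + m) j) ^ e)" for j e
    by (auto intro: int_poly_fun_power)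
  then show ?thesis
    unfolding poly_vec_eval_def
    by (intro int_poly_fun_sum int_poly_fun_mult[OF int_poly_fun_const] int_poly_fun_prod)
qed

lemma int_poly_fun_pairing_translate:
  "int_poly_fun (\<lambda>m. pairing p (\<lambda>k i. c k * poly_vec_eval h (k + m) i))"
  unfolding pairing_def
  by (intro int_poly_fun_sum int_poly_fun_mult[OF int_poly_fun_const]
      int_poly_fun_poly_vec_eval_translate)

definition laurent_translate :: "('d \<Rightarrow> int) \<Rightarrow> (('d \<Rightarrow> int) \<Rightarrow> ('r \<Rightarrow> complex))
    \<Rightarrow> (('d \<Rightarrow> int) \<Rightarrow> ('r \<Rightarrow> complex))" where
  "laurent_translate m p = (\<lambda>k. p (k - m))"

lemma lmult_monomial: "lmult (\<lambda>j. if j = m then 1 else 0) p = laurent_translate m p"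
proof -
  have "{j. (if j = m then 1 else 0 :: complex) \<noteq> 0} = {m}" by auto
  then show ?thesis unfolding lmult_def laurent_translate_def by auto
qed

lemma laurent_submodule_translate:
  assumes "laurent_submodule B" and "p \<in> B"
  shows "laurent_translate m p \<in> B"
proof -
  have "laurent_poly (\<lambda>j. if j = m then 1 else 0 :: complex)"
    unfolding laurent_poly_def by (simp add: Collect_conv_if)
  with assms show ?thesis
    unfolding laurent_submodule_def by (metis lmult_monomial)
qed

lemma support_laurent_translate:
  "{k. laurent_translate m p k \<noteq> 0} = (\<lambda>k. k + m) ` {k. p k \<noteq> 0}"
  unfolding laurent_translate_def by (force simp: image_iff intro: exI[of _ "_ - m"])

lemma poly_vec_laurent_translate:
  assumes "laurent_vec p"
  shows "\<exists>M. \<forall>m. (\<forall>i. M i \<le> m i) \<longrightarrow> poly_vec (laurent_translate m p)"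
proof (intro exI allI impI)
  let ?K = "{k. p k \<noteq> 0}"
  have "finite ?K" using assms unfolding laurent_vec_def .
  fix m assume m: "\<forall>i. (\<Sum>k\<in>?K. \<bar>k i\<bar>) \<le> m i"
  have "0 \<le> k i" if "laurent_translate m p k \<noteq> 0" for k i
  proof -
    have "k - m \<in> ?K" using that unfolding laurent_translate_def by simp
    then have "\<bar>(k - m) i\<bar> \<le> (\<Sum>k\<in>?K. \<bar>k i\<bar>)"
      by (rule member_le_sum) (simp_all add: \<open>finite ?K\<close>)
    with m[rule_format, of i] show ?thesis by simp
  qed
  then show "poly_vec (laurent_translate m p)"
    unfolding poly_vec_def laurent_vec_def support_laurent_translate
    using \<open>finite ?K\<close> by auto
qed

lemma pairing_laurent_translate:
  "pairing (laurent_translate m p) u = pairing p (\<lambda>k. u (k + m))"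
proof -
  have "pairing (laurent_translate m p) u
      = (\<Sum>k\<in>(\<lambda>k. k + m) ` {k. p k \<noteq> 0}. \<Sum>i\<in>UNIV. laurent_translate m p k i * u k i)"
    unfolding pairing_def support_laurent_translate ..
  also have "\<dots> = pairing p (\<lambda>k. u (k + m))"
    unfolding pairing_def laurent_translate_def by (subst sum.reindex) (auto simp: inj_on_def)
  finally show ?thesis .
qed

lemma pairing_pg_seq_translate:
  assumes "\<forall>j. \<omega> j \<noteq> 0"
  shows "pairing p (\<lambda>k. pg_seq \<omega> h (k + m))
    = (\<Prod>j\<in>UNIV. \<omega> j powi m j)
      * pairing p (\<lambda>k i. (\<Prod>j\<in>UNIV. \<omega> j powi k j) * poly_vec_eval h (k + m) i)"
proof -
  have "(\<Prod>j\<in>UNIV. \<omega> j powi (k + m) j) = (\<Prod>j\<in>UNIV. \<omega> j powi m j) * (\<Prod>j\<in>UNIV. \<omega> j powi k j)"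
    for k using assms by (simp add: power_int_add prod.distrib mult.commute)
  then show ?thesis
    unfolding pairing_def pg_seq_def by (simp add: sum_distrib_left mult_ac)
qed

theorem lemma4p8:
  fixes B :: "(('d::finite \<Rightarrow> int) \<Rightarrow> ('r::finite \<Rightarrow> complex)) set"
    and \<omega> :: "'d \<Rightarrow> complex"
    and h :: "('d \<Rightarrow> int) \<Rightarrow> ('r \<Rightarrow> complex)"
  assumes "laurent_submodule B"
    and "B \<noteq> {p. laurent_vec p}"
    and "\<forall>j. \<omega> j \<noteq> 0"
    and "poly_vec h"
  shows "orthogonal_to B (pg_seq \<omega> h) \<longleftrightarrow> orthogonal_to (B \<inter> {p. poly_vec p}) (pg_seq \<omega> h)"
proof
  assume orth: "orthogonal_to (B \<inter> {p. poly_vec p}) (pg_seq \<omega> h)"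
  show "orthogonal_to B (pg_seq \<omega> h)"
    unfolding orthogonal_to_def
  proof
    fix p assume "p \<in> B"
    define G where "G m = pairing p (\<lambda>k i. (\<Prod>j\<in>UNIV. \<omega> j powi k j) * poly_vec_eval h (k + m) i)" for m
    have "laurent_vec p" using assms(1) \<open>p \<in> B\<close> unfolding laurent_submodule_def by blast
    then obtain M where M: "\<And>m. \<forall>i. M i \<le> m i \<Longrightarrow> poly_vec (laurent_translate m p)"
      using poly_vec_laurent_translate by blast
    have vanish: "G m = 0" if "\<forall>i. M i \<le> m i" for m
    proof -
      have "laurent_translate m p \<in> B \<inter> {p. poly_vec p}"
        using laurent_submodule_translate[OF assms(1) \<open>p \<in> B\<close>] M[OF that] by simp
      then have "0 = pairing (laurent_translate m p) (pg_seq \<omega> h)"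
        using orth unfolding orthogonal_to_def by simp
      also have "\<dots> = pairing p (\<lambda>k. pg_seq \<omega> h (k + m))"
        by (rule pairing_laurent_translate)
      also have "\<dots> = (\<Prod>j\<in>UNIV. \<omega> j powi m j) * G m"
        unfolding G_def by (rule pairing_pg_seq_translate[OF assms(3)])
      finally have "(\<Prod>j\<in>UNIV. \<omega> j powi m j) * G m = 0" by simp
      then show ?thesis using assms(3) by simp
    qed
    have "int_poly_fun G"
      unfolding G_def by (rule int_poly_fun_pairing_translate)
    then have "G 0 = 0"
      using vanish by (rule int_poly_fun_eq_0_if_vanishes_on_orthant)
    then show "pairing p (pg_seq \<omega> h) = 0" unfolding G_def pg_seq_def by simp
  qed
qed (auto simp: orthogonal_to_def)

end
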